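(* Let $\Lambda$ be a finite connected graph with positive edge weights $J_{xy}$. Suppose the ferromagnetic spin-$1/2$ Heisenberg Hamiltonian $H=\sum_{x\sim y\in\Lambda}J_{xy}\big(\tfrac14\mathbb 1-\vec S_x\cdot\vec S_y\big)$ on $(\mathbb C^2)^{\otimes|\Lambda|}$ has the FOEL property. Then for the symmetric simple exclusion process on $\Lambda$ with jump rates $J_{xy}/2$ one has $\lambda(n)=\lambda(1)$ for all $1\le n\le|\Lambda|-1$.
   Context: $S^i_x$ are spin-$1/2$ matrices on site $x$. FOEL: with $\mathcal H^{(S)}$ the eigenspace of total spin $S$ (Casimir eigenvalue $S(S+1)$) and $E(H,S)=\min\operatorname{spec}(H|_{\mathcal H^{(S)}})$, one has $E(H,S)<E(H,S')$ whenever $S'<S$. The SSEP with jump rates $c_{xy}>0$ on $\Lambda$ has generator $L$ acting on functions $f$ on $\Omega_\Lambda=\{0,1\}^\Lambda$ by $(Lf)(\eta)=\sum_{x\sim y}c_{xy}(f(\eta)-f(\eta^{xy}))$, where $\eta^{xy}$ is $\eta$ with the values at $x$ and $y$ interchanged. $L$ leaves invariant each space of functions supported on $n$-particle configurations ($\sum_x\eta(x)=n$), is nonnegative, and $0$ is a simple eigenvalue on each such space; $\lambda(n)$ denotes the smallest positive eigenvalue of $L$ restricted to the $n$-particle space. *)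

theory Defs
  imports Complex_Main
begin

text \<open>Sites are the elements of a finite type 'v (the graph Lambda).  A basis
configuration of (C^2)^{tensor |Lambda|} is a map 'v => bool (True = spin up,
False = spin down); a state vector is a function from configurations to complex.
The same configurations serve as the SSEP configuration space {0,1}^Lambda.\<close>

type_synonym 'v state = "('v \<Rightarrow> bool) \<Rightarrow> complex"

text \<open>Spin-1/2 matrices S^i = sigma^i / 2 (i = 1,2,3), entries indexed by
(row, column), True = up.\<close>
definition spin_mat :: "nat \<Rightarrow> bool \<Rightarrow> bool \<Rightarrow> complex" where
  "spin_mat i a b =
     (if i = 1 then (if a \<noteq> b then 1/2 else 0)
      else if i = 2 then (if a = b then 0 else if a then - \<i>/2 else \<i>/2)
      else if i = 3 then (if a = b then (if a then 1/2 else -1/2) else 0)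
      else 0)"

definition site_spin :: "nat \<Rightarrow> 'v \<Rightarrow> 'v state \<Rightarrow> 'v state" where
  "site_spin i x \<psi> = (\<lambda>\<eta>. \<Sum>b\<in>UNIV. spin_mat i (\<eta> x) b * \<psi> (\<eta>(x := b)))"

definition total_spin :: "nat \<Rightarrow> ('v::finite) state \<Rightarrow> 'v state" where
  "total_spin i \<psi> = (\<lambda>\<eta>. \<Sum>x\<in>UNIV. site_spin i x \<psi> \<eta>)"

definition casimir :: "('v::finite) state \<Rightarrow> 'v state" where
  "casimir \<psi> = (\<lambda>\<eta>. \<Sum>i\<in>{1,2,3}. total_spin i (total_spin i \<psi>) \<eta>)"

text \<open>H = sum over edges {x,y} of J_xy (1/4 - S_x . S_y).  With J symmetric and
J x x = 0 the sum over unordered edges is half of the double sum.\<close>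
definition heis_ham :: "('v::finite \<Rightarrow> 'v \<Rightarrow> real) \<Rightarrow> 'v state \<Rightarrow> 'v state" where
  "heis_ham J \<psi> = (\<lambda>\<eta>. (1/2) * (\<Sum>x\<in>UNIV. \<Sum>y\<in>UNIV. complex_of_real (J x y) *
        (\<psi> \<eta> / 4 - (\<Sum>i\<in>{1,2,3}. site_spin i x (site_spin i y \<psi>) \<eta>))))"

definition spin_space :: "real \<Rightarrow> ('v::finite) state set" where
  "spin_space S = {\<psi>. casimir \<psi> = (\<lambda>\<eta>. complex_of_real (S * (S + 1)) * \<psi> \<eta>)}"

definition min_energy :: "(('v::finite) state \<Rightarrow> 'v state) \<Rightarrow> real \<Rightarrow> real" where
  "min_energy H S = Min {E. \<exists>\<psi>\<in>spin_space S. \<psi> \<noteq> (\<lambda>_. 0) \<and> H \<psi> = (\<lambda>\<eta>. complex_of_real E * \<psi> \<eta>)}"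

definition FOEL :: "(('v::finite) state \<Rightarrow> 'v state) \<Rightarrow> bool" where
  "FOEL H \<longleftrightarrow> (\<forall>S S' :: real. 0 \<le> S' \<longrightarrow> S' < S \<longrightarrow>
      (spin_space S :: 'v state set) \<noteq> {\<lambda>_. 0} \<longrightarrow> (spin_space S' :: 'v state set) \<noteq> {\<lambda>_. 0} \<longrightarrow>
      min_energy H S < min_energy H S')"

definition swap_cfg :: "('v \<Rightarrow> bool) \<Rightarrow> 'v \<Rightarrow> 'v \<Rightarrow> ('v \<Rightarrow> bool)" where
  "swap_cfg \<eta> x y = \<eta>(x := \<eta> y, y := \<eta> x)"

text \<open>(Lf)(eta) = sum over edges {x,y} c_xy (f eta - f eta^{xy}); again half of
the double sum for symmetric c with vanishing diagonal.\<close>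
definition ssep_gen :: "('v::finite \<Rightarrow> 'v \<Rightarrow> real) \<Rightarrow> (('v \<Rightarrow> bool) \<Rightarrow> real) \<Rightarrow> (('v \<Rightarrow> bool) \<Rightarrow> real)" where
  "ssep_gen c f = (\<lambda>\<eta>. (1/2) * (\<Sum>x\<in>UNIV. \<Sum>y\<in>UNIV. c x y * (f \<eta> - f (swap_cfg \<eta> x y))))"

definition n_particle_space :: "nat \<Rightarrow> (('v::finite \<Rightarrow> bool) \<Rightarrow> real) set" where
  "n_particle_space n = {f. \<forall>\<eta>. f \<eta> \<noteq> 0 \<longrightarrow> card {x. \<eta> x} = n}"

definition ssep_gap :: "('v::finite \<Rightarrow> 'v \<Rightarrow> real) \<Rightarrow> nat \<Rightarrow> real" where
  "ssep_gap c n = Min {l. 0 < l \<and> (\<exists>f\<in>n_particle_space n. f \<noteq> (\<lambda>_. 0) \<and> ssep_gen c f = (\<lambda>\<eta>. l * f \<eta>))}"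

end

theory Submission
  imports Defs "HOL-Analysis.Analysis"
begin

text \<open>By Dirac's identity \<open>S\<^sub>x \<cdot> S\<^sub>y = (2 P\<^sub>x\<^sub>y - 1) / 4\<close>, both \<open>H\<close> and the Casimir are
  linear combinations of the identity and site transpositions \<open>P\<^sub>x\<^sub>y\<close>. Hence they commute
  with each other and with the total raising and lowering operators, and they preserve the
  particle number; on the \<open>n\<close>-particle sector \<open>H\<close> is the SSEP generator with rates \<open>J/2\<close>.
  A joint eigenvector of \<open>H\<close> and the Casimir of total spin \<open>S\<close> generates a multiplet that
  carries its \<open>H\<close>-eigenvalue to every sector with between \<open>N/2 - S\<close> and \<open>N/2 + S\<close> particles,
  where \<open>N = |\<Lambda>|\<close>. Only the eigenvalue 0 occurs with 0 or \<open>N\<close> particles, so a positive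
  eigenvalue has spin \<open>S < N/2\<close>. For \<open>S = N/2 - 1\<close> it occurs with one particle; for smaller
  \<open>S\<close> FOEL makes it exceed \<open>E(H, N/2 - 1)\<close>, which itself occurs with one particle. Thus
  \<open>\<lambda>(n) \<ge> \<lambda>(1)\<close>. Conversely, an eigenvector for \<open>\<lambda>(1)\<close> is annihilated by \<open>S\<^sup>-\<close>, hence has
  spin \<open>N/2 - 1\<close>, and raising it yields an \<open>n\<close>-particle eigenvector for \<open>\<lambda>(1)\<close>.\<close>

section \<open>Spin operators as permutation operators\<close>

definition perm_op :: "real \<Rightarrow> ('v::finite \<Rightarrow> 'v \<Rightarrow> real) \<Rightarrow> 'v state \<Rightarrow> 'v state" where
  "perm_op a b \<psi> = (\<lambda>\<eta>. complex_of_real a * \<psi> \<eta> +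
      (\<Sum>x\<in>UNIV. \<Sum>y\<in>UNIV. complex_of_real (b x y) * \<psi> (swap_cfg \<eta> x y)))"

lemma spin_dot_eq_swap:
  "(\<Sum>i\<in>{1,2,3::nat}. site_spin i x (site_spin i y \<psi>) \<eta>) =
    (2 * \<psi> (swap_cfg \<eta> x y) - \<psi> \<eta>) / 4 + (if x = y then \<psi> \<eta> / 2 else 0)"
  by (cases "x = y"; cases "\<eta> x"; cases "\<eta> y")
     (simp_all add: site_spin_def spin_mat_def UNIV_bool swap_cfg_def field_simps fun_upd_twist fun_upd_idem)

lemma site_spin_sum:
  "site_spin i x (\<lambda>\<eta>'. \<Sum>y\<in>A. f y \<eta>') \<eta> = (\<Sum>y\<in>A. site_spin i x (f y) \<eta>)"
  unfolding site_spin_def by (simp add: sum_distrib_left sum.swap[of _ UNIV])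

lemma casimir_eq_sum_spin_dot:
  "casimir \<psi> \<eta> = (\<Sum>x\<in>UNIV. \<Sum>y\<in>UNIV. \<Sum>i\<in>{1,2,3::nat}. site_spin i x (site_spin i y \<psi>) \<eta>)"
proof -
  have "casimir \<psi> \<eta> = (\<Sum>i\<in>{1,2,3::nat}. \<Sum>x\<in>UNIV. \<Sum>y\<in>UNIV. site_spin i x (site_spin i y \<psi>) \<eta>)"
    unfolding casimir_def total_spin_def by (simp only: site_spin_sum)
  then show ?thesis
    by (simp only: sum.swap[of _ "{1,2,3::nat}"])
qed

lemma casimir_eq_perm_op:
  "(casimir :: ('v::finite) state \<Rightarrow> 'v state) =
     perm_op (real CARD('v) / 2 - real CARD('v) ^ 2 / 4) (\<lambda>_ _. 1/2)"
proof (intro ext)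
  fix \<psi> :: "'v state" and \<eta>
  have "casimir \<psi> \<eta> = (\<Sum>x\<in>UNIV. \<Sum>y\<in>UNIV. (1/2) * \<psi> (swap_cfg \<eta> x y)
      + (- \<psi> \<eta> / 4) + (if x = y then \<psi> \<eta> / 2 else 0))"
    unfolding casimir_eq_sum_spin_dot spin_dot_eq_swap by (simp add: field_simps)
  also have "\<dots> = (\<Sum>x\<in>UNIV. \<Sum>y\<in>UNIV. (1/2) * \<psi> (swap_cfg \<eta> x y))
      + of_nat CARD('v) * of_nat CARD('v) * (- \<psi> \<eta> / 4) + of_nat CARD('v) * (\<psi> \<eta> / 2)"
    by (simp only: sum.distrib) simp
  finally show "casimir \<psi> \<eta> = perm_op (real CARD('v) / 2 - real CARD('v) ^ 2 / 4) (\<lambda>_ _. 1/2) \<psi> \<eta>"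
    by (simp add: perm_op_def field_simps power2_eq_square)
qed

lemma heis_ham_eq_perm_op:
  assumes "\<And>x. J x x = 0"
  shows "heis_ham J = perm_op (\<Sum>x\<in>UNIV. \<Sum>y\<in>UNIV. J x y / 4) (\<lambda>x y. - J x y / 4)"
proof (intro ext)
  fix \<psi> \<eta>
  have "heis_ham J \<psi> \<eta> = (\<Sum>x\<in>UNIV. \<Sum>y\<in>UNIV. complex_of_real (J x y / 4) * \<psi> \<eta>
     + complex_of_real (- J x y / 4) * \<psi> (swap_cfg \<eta> x y))"
    unfolding heis_ham_def spin_dot_eq_swap sum_distrib_left
    by (intro sum.cong refl) (use assms in \<open>auto simp: field_simps\<close>)
  then show "heis_ham J \<psi> \<eta> = perm_op (\<Sum>x\<in>UNIV. \<Sum>y\<in>UNIV. J x y / 4) (\<lambda>x y. - J x y / 4) \<psi> \<eta>"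
    unfolding perm_op_def of_real_sum sum_distrib_right by (simp only: sum.distrib)
qed

section \<open>Raising and lowering operators\<close>

text \<open>\<open>site_ladder True x\<close> is \<open>S\<^sup>+\<^sub>x\<close> and \<open>site_ladder False x\<close> is \<open>S\<^sup>-\<^sub>x\<close>.\<close>

definition site_ladder :: "bool \<Rightarrow> 'v \<Rightarrow> 'v state \<Rightarrow> 'v state" where
  "site_ladder s x \<psi> = (\<lambda>\<eta>. if \<eta> x = s then \<psi> (\<eta>(x := \<not> s)) else 0)"

definition total_ladder :: "bool \<Rightarrow> ('v::finite) state \<Rightarrow> 'v state" where
  "total_ladder s \<psi> = (\<lambda>\<eta>. \<Sum>x\<in>UNIV. site_ladder s x \<psi> \<eta>)"

abbreviation spin_raise :: "('v::finite) state \<Rightarrow> 'v state" where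
  "spin_raise \<equiv> total_ladder True"

abbreviation spin_lower :: "('v::finite) state \<Rightarrow> 'v state" where
  "spin_lower \<equiv> total_ladder False"

definition spin_z :: "bool \<Rightarrow> complex" where
  "spin_z b = (if b then 1/2 else -1/2)"

definition up_count :: "('v::finite \<Rightarrow> bool) \<Rightarrow> nat" where
  "up_count \<eta> = card {x. \<eta> x}"

definition magnetization :: "('v::finite \<Rightarrow> bool) \<Rightarrow> real" where
  "magnetization \<eta> = real (up_count \<eta>) - real CARD('v) / 2"

lemma spin_dot_eq_ladder:
  "(\<Sum>i\<in>{1,2,3::nat}. site_spin i x (site_spin i y \<psi>) \<eta>) =
    (site_ladder False x (site_ladder True y \<psi>) \<eta> + site_ladder True x (site_ladder False y \<psi>) \<eta>) / 2
    + spin_z (\<eta> x) * spin_z (\<eta> y) * \<psi> \<eta>"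
  by (cases "x = y"; cases "\<eta> x"; cases "\<eta> y")
     (simp_all add: site_ladder_def spin_z_def site_spin_def spin_mat_def UNIV_bool field_simps
       fun_upd_twist fun_upd_idem)

lemma site_ladder_commutator:
  "site_ladder True x (site_ladder False y \<psi>) \<eta> =
     site_ladder False y (site_ladder True x \<psi>) \<eta> + (if x = y then 2 * spin_z (\<eta> x) * \<psi> \<eta> else 0)"
  by (cases "x = y"; cases "\<eta> x"; cases "\<eta> y")
     (simp_all add: site_ladder_def spin_z_def fun_upd_twist fun_upd_idem)

lemma sum_spin_z: "(\<Sum>x\<in>UNIV. spin_z (\<eta> x)) = complex_of_real (magnetization \<eta>)"
proof -
  have "(\<Sum>x\<in>UNIV. spin_z (\<eta> x)) = (\<Sum>x\<in>UNIV. of_bool (\<eta> x) - 1/2)"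
    by (intro sum.cong) (auto simp: spin_z_def)
  then show ?thesis
    by (simp add: magnetization_def up_count_def sum_subtractf)
qed

lemma total_ladder_total_ladder:
  "total_ladder s (total_ladder t \<psi>) \<eta> = (\<Sum>x\<in>UNIV. \<Sum>y\<in>UNIV. site_ladder s x (site_ladder t y \<psi>) \<eta>)"
  unfolding total_ladder_def site_ladder_def by (auto intro: sum.cong)

lemma raise_lower_commutator:
  "spin_raise (spin_lower \<psi>) \<eta> = spin_lower (spin_raise \<psi>) \<eta> + 2 * complex_of_real (magnetization \<eta>) * \<psi> \<eta>"
proof -
  have "spin_raise (spin_lower \<psi>) \<eta> = (\<Sum>x\<in>UNIV. \<Sum>y\<in>UNIV. site_ladder False y (site_ladder True x \<psi>) \<eta>)
      + (\<Sum>x\<in>UNIV. 2 * spin_z (\<eta> x) * \<psi> \<eta>)"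
    unfolding total_ladder_total_ladder site_ladder_commutator by (simp add: sum.distrib)
  also have "(\<Sum>x\<in>UNIV. \<Sum>y\<in>UNIV. site_ladder False y (site_ladder True x \<psi>) \<eta>) = spin_lower (spin_raise \<psi>) \<eta>"
    unfolding total_ladder_total_ladder by (rule sum.swap)
  also have "(\<Sum>x\<in>UNIV. 2 * spin_z (\<eta> x) * \<psi> \<eta>) = 2 * complex_of_real (magnetization \<eta>) * \<psi> \<eta>"
    by (simp only: sum_distrib_right[symmetric] sum_distrib_left[symmetric] sum_spin_z)
  finally show ?thesis .
qed

lemma casimir_eq_lower_raise:
  "casimir \<psi> \<eta> = spin_lower (spin_raise \<psi>) \<eta> + complex_of_real (magnetization \<eta> ^ 2 + magnetization \<eta>) * \<psi> \<eta>"
proof -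
  have "(\<Sum>x\<in>UNIV. \<Sum>y\<in>UNIV. spin_z (\<eta> x) * spin_z (\<eta> y) * \<psi> \<eta>) =
      (\<Sum>x\<in>UNIV. spin_z (\<eta> x)) * (\<Sum>y\<in>UNIV. spin_z (\<eta> y)) * \<psi> \<eta>"
    unfolding sum_distrib_left sum_distrib_right by (rule sum.swap)
  then have "casimir \<psi> \<eta> = spin_lower (spin_raise \<psi>) \<eta> / 2 + spin_raise (spin_lower \<psi>) \<eta> / 2
      + complex_of_real (magnetization \<eta> ^ 2) * \<psi> \<eta>"
    unfolding casimir_eq_sum_spin_dot spin_dot_eq_ladder total_ladder_total_ladder
    by (simp add: sum.distrib add_divide_distrib sum_divide_distrib sum_spin_z power2_eq_square)
  then have "2 * casimir \<psi> \<eta> = 2 * (spin_lower (spin_raise \<psi>) \<eta>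
      + complex_of_real (magnetization \<eta> ^ 2 + magnetization \<eta>) * \<psi> \<eta>)"
    unfolding raise_lower_commutator by (simp add: algebra_simps)
  then show ?thesis by (metis mult_left_cancel zero_neq_numeral)
qed

lemma casimir_eq_raise_lower:
  "casimir \<psi> \<eta> = spin_raise (spin_lower \<psi>) \<eta> + complex_of_real (magnetization \<eta> ^ 2 - magnetization \<eta>) * \<psi> \<eta>"
  unfolding casimir_eq_lower_raise raise_lower_commutator by (simp add: field_simps)

section \<open>Particle-number sectors\<close>

lemma swap_cfg_eq_comp_transpose: "swap_cfg \<eta> x y = \<eta> \<circ> Transposition.transpose x y"
  by (auto simp: swap_cfg_def Transposition.transpose_def fun_eq_iff)

lemma swap_cfg_swap_cfg [simp]: "swap_cfg (swap_cfg \<eta> x y) x y = \<eta>"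
  by (simp add: swap_cfg_eq_comp_transpose comp_assoc)

lemma sum_swap_cfg: "(\<Sum>\<eta>\<in>UNIV. g (swap_cfg \<eta> x y)) = (\<Sum>\<eta>\<in>UNIV. g \<eta>)"
  by (rule sum.reindex_bij_witness[where i="\<lambda>\<eta>. swap_cfg \<eta> x y" and j="\<lambda>\<eta>. swap_cfg \<eta> x y"]) auto

lemma swap_cfg_const [simp]: "swap_cfg (\<lambda>_. c) x y = (\<lambda>_. c)"
  by (simp add: swap_cfg_def fun_eq_iff)

lemma up_count_swap_cfg [simp]: "up_count (swap_cfg \<eta> x y) = up_count \<eta>"
proof -
  have "{z. swap_cfg \<eta> x y z} = Transposition.transpose x y ` {z. \<eta> z}"
  proof (auto simp: swap_cfg_eq_comp_transpose)
    fix z assume "\<eta> (Transposition.transpose x y z)"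
    then show "z \<in> Transposition.transpose x y ` {z. \<eta> z}"
      by (intro image_eqI[of _ _ "Transposition.transpose x y z"]) simp_all
  qed
  then show ?thesis
    unfolding up_count_def by (simp add: card_image)
qed

lemma up_count_le: "up_count (\<eta>::'v::finite \<Rightarrow> bool) \<le> CARD('v)"
  unfolding up_count_def by (rule card_mono) auto

lemma up_count_flip_down:
  assumes "\<eta> z"
  shows "up_count \<eta> = Suc (up_count (\<eta>(z := False)))"
proof -
  have "{u. \<eta> u} = insert z {u. (\<eta>(z := False)) u}"
    using assms by auto
  then show ?thesis
    unfolding up_count_def by (metis card_insert_disjoint finite fun_upd_same mem_Collect_eq)
qed

lemma up_count_flip_up: "\<not> \<eta> z \<Longrightarrow> up_count (\<eta>(z := True)) = Suc (up_count \<eta>)"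
  using up_count_flip_down[of "\<eta>(z := True)" z] by (simp add: fun_upd_idem)

lemma up_count_eq_card_iff: "up_count (\<eta>::'v::finite \<Rightarrow> bool) = CARD('v) \<longleftrightarrow> \<eta> = (\<lambda>_. True)"
proof
  assume "up_count \<eta> = CARD('v)"
  then have "{x. \<eta> x} = UNIV"
    unfolding up_count_def using card_subset_eq[of UNIV "{x. \<eta> x}"] by auto
  then show "\<eta> = (\<lambda>_. True)" by auto
qed (simp add: up_count_def)

lemma up_count_eq_0_iff: "up_count (\<eta>::'v::finite \<Rightarrow> bool) = 0 \<longleftrightarrow> \<eta> = (\<lambda>_. False)"
  unfolding up_count_def by (auto simp: fun_eq_iff)

definition in_sector :: "nat \<Rightarrow> ('v::finite) state \<Rightarrow> bool" where
  "in_sector n \<psi> \<longleftrightarrow> (\<forall>\<eta>. \<psi> \<eta> \<noteq> 0 \<longrightarrow> up_count \<eta> = n)"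

definition sector_proj :: "nat \<Rightarrow> ('v::finite) state \<Rightarrow> 'v state" where
  "sector_proj n \<psi> = (\<lambda>\<eta>. if up_count \<eta> = n then \<psi> \<eta> else 0)"

lemma in_sector_sector_proj: "in_sector n (sector_proj n \<psi>)"
  unfolding in_sector_def sector_proj_def by auto

lemma sector_proj_nonzero: "\<psi> \<noteq> (\<lambda>_. 0) \<Longrightarrow> \<exists>n. sector_proj n \<psi> \<noteq> (\<lambda>_. 0)"
  unfolding sector_proj_def by (metis (full_types))

lemma in_sector_above_card: "in_sector n (\<psi>::'v::finite state) \<Longrightarrow> CARD('v) < n \<Longrightarrow> \<psi> = (\<lambda>_. 0)"
  unfolding in_sector_def using up_count_le by (metis leD)

lemma in_sector_perm_op:
  assumes "in_sector n \<psi>"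
  shows "in_sector n (perm_op a b \<psi>)"
  unfolding in_sector_def
proof (intro allI impI)
  fix \<eta> assume nz: "perm_op a b \<psi> \<eta> \<noteq> 0"
  show "up_count \<eta> = n"
  proof (rule ccontr)
    assume "up_count \<eta> \<noteq> n"
    then have "\<psi> \<eta> = 0" and "\<And>x y. \<psi> (swap_cfg \<eta> x y) = 0"
      using assms unfolding in_sector_def by auto
    then show False using nz unfolding perm_op_def by simp
  qed
qed

lemma in_sector_add: "in_sector n \<phi> \<Longrightarrow> in_sector n \<psi> \<Longrightarrow> in_sector n (\<lambda>\<eta>. \<phi> \<eta> + \<psi> \<eta>)"
  unfolding in_sector_def by (metis add.right_neutral)

lemma in_sector_scale: "in_sector n \<psi> \<Longrightarrow> in_sector n (\<lambda>\<eta>. c * \<psi> \<eta>)"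
  unfolding in_sector_def by simp

lemma in_sector_zero: "in_sector n (\<lambda>_. 0)"
  unfolding in_sector_def by simp

lemma sector_proj_scale: "sector_proj n (\<lambda>\<eta>. c * \<psi> \<eta>) = (\<lambda>\<eta>. c * sector_proj n \<psi> \<eta>)"
  by (simp add: sector_proj_def fun_eq_iff)

lemma perm_op_extreme_sector:
  fixes \<psi> :: "('v::finite) state"
  assumes "in_sector n \<psi>" and "n = 0 \<or> n = CARD('v)"
  shows "perm_op a b \<psi> = (\<lambda>\<eta>. complex_of_real (a + (\<Sum>x\<in>UNIV. \<Sum>y\<in>UNIV. b x y)) * \<psi> \<eta>)"
proof
  fix \<eta>
  show "perm_op a b \<psi> \<eta> = complex_of_real (a + (\<Sum>x\<in>UNIV. \<Sum>y\<in>UNIV. b x y)) * \<psi> \<eta>"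
  proof (cases "up_count \<eta> = n")
    case True
    then obtain c where "\<eta> = (\<lambda>_. c)"
      using assms(2) up_count_eq_0_iff up_count_eq_card_iff by metis
    then show ?thesis
      by (simp add: perm_op_def sum_distrib_right distrib_right)
  next
    case False
    then have "\<psi> \<eta> = 0" "perm_op a b \<psi> \<eta> = 0"
      using assms(1) in_sector_perm_op[OF assms(1), of a b] unfolding in_sector_def by blast+
    then show ?thesis by simp
  qed
qed

lemma in_sector_spin_raise:
  assumes "in_sector n \<psi>"
  shows "in_sector (Suc n) (spin_raise \<psi>)"
  unfolding in_sector_def
proof (intro allI impI)
  fix \<eta> assume "spin_raise \<psi> \<eta> \<noteq> 0"
  then obtain z where "site_ladder True z \<psi> \<eta> \<noteq> 0"
    unfolding total_ladder_def by (meson sum.neutral)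
  then have "\<eta> z" "\<psi> (\<eta>(z := False)) \<noteq> 0"
    unfolding site_ladder_def by (auto split: if_splits)
  then show "up_count \<eta> = Suc n"
    using assms up_count_flip_down unfolding in_sector_def by metis
qed

lemma spin_lower_nonzero_sector:
  assumes "in_sector n \<psi>" and "spin_lower \<psi> \<eta> \<noteq> 0"
  shows "Suc (up_count \<eta>) = n"
proof -
  obtain z where "site_ladder False z \<psi> \<eta> \<noteq> 0"
    using assms(2) unfolding total_ladder_def by (meson sum.neutral)
  then have "\<not> \<eta> z" "\<psi> (\<eta>(z := True)) \<noteq> 0"
    unfolding site_ladder_def by (auto split: if_splits)
  then show ?thesis
    using assms(1) up_count_flip_up unfolding in_sector_def by metis
qed

lemma in_sector_spin_lower: "in_sector (Suc n) \<psi> \<Longrightarrow> in_sector n (spin_lower \<psi>)"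
  unfolding in_sector_def[of n] using spin_lower_nonzero_sector by fastforce

lemma spin_lower_sector_0: "in_sector 0 \<psi> \<Longrightarrow> spin_lower \<psi> = (\<lambda>_. 0)"
  using spin_lower_nonzero_sector by fastforce

lemma in_sector_spin_raise_iter: "in_sector n \<psi> \<Longrightarrow> in_sector (n + j) ((spin_raise ^^ j) \<psi>)"
  by (induction j) (auto intro: in_sector_spin_raise)

lemma in_sector_spin_lower_iter: "in_sector n \<psi> \<Longrightarrow> j \<le> n \<Longrightarrow> in_sector (n - j) ((spin_lower ^^ j) \<psi>)"
  by (induction j) (auto intro: in_sector_spin_lower simp: Suc_diff_Suc)

section \<open>Permutation operators commute with the ladder operators\<close>

lemma sum_swap3: "(\<Sum>z\<in>A. \<Sum>x\<in>B. \<Sum>y\<in>C. f z x y) = (\<Sum>x\<in>B. \<Sum>y\<in>C. \<Sum>z\<in>A. f z x y)"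
  by (subst sum.swap, rule sum.cong[OF refl], rule sum.swap)

lemma total_ladder_swap_cfg:
  "total_ladder s \<psi> (swap_cfg \<eta> x y) = total_ladder s (\<lambda>\<eta>'. \<psi> (swap_cfg \<eta>' x y)) \<eta>"
proof -
  let ?\<tau> = "Transposition.transpose x y"
  have upd: "(swap_cfg \<eta> x y)(?\<tau> z := b) = swap_cfg (\<eta>(z := b)) x y" for z b
    by (auto simp: swap_cfg_eq_comp_transpose fun_eq_iff transpose_eq_iff)
  have "total_ladder s \<psi> (swap_cfg \<eta> x y) = (\<Sum>z\<in>UNIV. site_ladder s (?\<tau> z) \<psi> (swap_cfg \<eta> x y))"
    unfolding total_ladder_def by (rule sum.reindex_bij_betw[symmetric]) simp
  also have "\<dots> = total_ladder s (\<lambda>\<eta>'. \<psi> (swap_cfg \<eta>' x y)) \<eta>"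
    unfolding total_ladder_def site_ladder_def upd by (simp add: swap_cfg_eq_comp_transpose)
  finally show ?thesis .
qed

lemma total_ladder_perm_op: "total_ladder s (perm_op a b \<psi>) = perm_op a b (total_ladder s \<psi>)"
proof (rule ext)
  fix \<eta>
  have site: "site_ladder s z (perm_op a b \<psi>) \<eta> = a * site_ladder s z \<psi> \<eta> +
      (\<Sum>x\<in>UNIV. \<Sum>y\<in>UNIV. b x y * site_ladder s z (\<lambda>\<eta>'. \<psi> (swap_cfg \<eta>' x y)) \<eta>)" for z
    by (simp add: site_ladder_def perm_op_def)
  have "total_ladder s (perm_op a b \<psi>) \<eta> = a * total_ladder s \<psi> \<eta> +
      (\<Sum>z\<in>UNIV. \<Sum>x\<in>UNIV. \<Sum>y\<in>UNIV. b x y * site_ladder s z (\<lambda>\<eta>'. \<psi> (swap_cfg \<eta>' x y)) \<eta>)"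
    unfolding total_ladder_def site by (simp only: sum.distrib sum_distrib_left)
  also have "\<dots> = a * total_ladder s \<psi> \<eta> +
      (\<Sum>x\<in>UNIV. \<Sum>y\<in>UNIV. b x y * total_ladder s \<psi> (swap_cfg \<eta> x y))"
    unfolding total_ladder_swap_cfg by (subst sum_swap3) (simp only: total_ladder_def sum_distrib_left)
  also have "\<dots> = perm_op a b (total_ladder s \<psi>) \<eta>"
    unfolding perm_op_def ..
  finally show "total_ladder s (perm_op a b \<psi>) \<eta> = perm_op a b (total_ladder s \<psi>) \<eta>" .
qed

lemma total_ladder_scale: "total_ladder s (\<lambda>\<eta>. c * \<psi> \<eta>) = (\<lambda>\<eta>. c * total_ladder s \<psi> \<eta>)"
  unfolding total_ladder_def site_ladder_def by (auto simp: sum_distrib_left intro!: sum.cong)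

lemma total_ladder_add: "total_ladder s (\<lambda>\<eta>. \<phi> \<eta> + \<psi> \<eta>) = (\<lambda>\<eta>. total_ladder s \<phi> \<eta> + total_ladder s \<psi> \<eta>)"
  unfolding total_ladder_def site_ladder_def by (auto simp: sum.distrib[symmetric] intro!: sum.cong)

lemma total_ladder_zero: "total_ladder s (\<lambda>_. 0) = (\<lambda>_. 0)"
  unfolding total_ladder_def site_ladder_def by simp

lemma perm_op_add: "perm_op a b (\<lambda>\<eta>. \<phi> \<eta> + \<psi> \<eta>) = (\<lambda>\<eta>. perm_op a b \<phi> \<eta> + perm_op a b \<psi> \<eta>)"
  by (simp add: perm_op_def fun_eq_iff distrib_left sum.distrib algebra_simps)

lemma perm_op_scale: "perm_op a b (\<lambda>\<eta>. c * \<psi> \<eta>) = (\<lambda>\<eta>. c * perm_op a b \<psi> \<eta>)"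
  by (simp add: perm_op_def fun_eq_iff distrib_left sum_distrib_left mult_ac)

lemma perm_op_zero: "perm_op a b (\<lambda>_. 0) = (\<lambda>_. 0)"
  by (simp add: perm_op_def)

lemma perm_op_Re: "perm_op a b (\<lambda>\<eta>. complex_of_real (Re (\<psi> \<eta>))) = (\<lambda>\<eta>. complex_of_real (Re (perm_op a b \<psi> \<eta>)))"
  by (simp add: perm_op_def fun_eq_iff complex_eq_iff)

lemma perm_op_Im: "perm_op a b (\<lambda>\<eta>. complex_of_real (Im (\<psi> \<eta>))) = (\<lambda>\<eta>. complex_of_real (Im (perm_op a b \<psi> \<eta>)))"
  by (simp add: perm_op_def fun_eq_iff complex_eq_iff)

lemma perm_op_mult_up_count: "perm_op a b (\<lambda>\<eta>. h (up_count \<eta>) * \<psi> \<eta>) = (\<lambda>\<eta>. h (up_count \<eta>) * perm_op a b \<psi> \<eta>)"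
  by (simp add: perm_op_def fun_eq_iff distrib_left sum_distrib_left mult_ac)

lemma perm_op_sector_proj: "perm_op a b (sector_proj n \<psi>) = sector_proj n (perm_op a b \<psi>)"
  unfolding perm_op_def sector_proj_def by (auto simp: fun_eq_iff)

lemma perm_op_casimir:
  fixes \<psi> :: "('v::finite) state"
  shows "perm_op a b (casimir \<psi>) = casimir (perm_op a b \<psi>)"
proof -
  define h where "h k = complex_of_real ((real k - real CARD('v)/2)^2 + (real k - real CARD('v)/2))" for k
  have casimir_h: "casimir \<phi> = (\<lambda>\<eta>. spin_lower (spin_raise \<phi>) \<eta> + h (up_count \<eta>) * \<phi> \<eta>)" for \<phi> :: "'v state"
    unfolding casimir_eq_lower_raise h_def magnetization_def by simp
  show ?thesis
    unfolding casimir_h perm_op_add perm_op_mult_up_count total_ladder_perm_op ..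
qed

lemma eigen_total_ladder_iter:
  assumes "perm_op a b \<psi> = (\<lambda>\<eta>. c * \<psi> \<eta>)"
  shows "perm_op a b ((total_ladder s ^^ j) \<psi>) = (\<lambda>\<eta>. c * (total_ladder s ^^ j) \<psi> \<eta>)"
  using assms by (induction j) (simp_all add: total_ladder_perm_op[symmetric] total_ladder_scale)

section \<open>Spin multiplets\<close>

lemma highest_weight_spin_space:
  fixes \<psi> :: "('v::finite) state"
  assumes "in_sector n \<psi>" "spin_raise \<psi> = (\<lambda>_. 0)"
  shows "\<psi> \<in> spin_space (real n - real CARD('v) / 2)"
  unfolding spin_space_def
proof (intro CollectI ext)
  fix \<eta> :: "'v \<Rightarrow> bool"
  show "casimir \<psi> \<eta> = complex_of_real ((real n - real CARD('v) / 2) * (real n - real CARD('v) / 2 + 1)) * \<psi> \<eta>"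
  proof (cases "\<psi> \<eta> = 0")
    case True
    then show ?thesis unfolding casimir_eq_lower_raise assms(2) total_ladder_zero by simp
  next
    case False
    then have "up_count \<eta> = n" using assms(1) unfolding in_sector_def by blast
    then have m: "magnetization \<eta> ^ 2 + magnetization \<eta> =
        (real n - real CARD('v) / 2) * (real n - real CARD('v) / 2 + 1)"
      unfolding magnetization_def by (simp add: power2_eq_square algebra_simps)
    show ?thesis unfolding casimir_eq_lower_raise assms(2) total_ladder_zero m by simp
  qed
qed

lemma lowest_weight_spin_space:
  fixes \<psi> :: "('v::finite) state"
  assumes "in_sector n \<psi>" "spin_lower \<psi> = (\<lambda>_. 0)"
  shows "\<psi> \<in> spin_space (real CARD('v) / 2 - real n)"
  unfolding spin_space_def
proof (intro CollectI ext)
  fix \<eta> :: "'v \<Rightarrow> bool"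
  show "casimir \<psi> \<eta> = complex_of_real ((real CARD('v) / 2 - real n) * (real CARD('v) / 2 - real n + 1)) * \<psi> \<eta>"
  proof (cases "\<psi> \<eta> = 0")
    case True
    then show ?thesis unfolding casimir_eq_raise_lower assms(2) total_ladder_zero by simp
  next
    case False
    then have "up_count \<eta> = n" using assms(1) unfolding in_sector_def by blast
    then have m: "magnetization \<eta> ^ 2 - magnetization \<eta> =
        (real CARD('v) / 2 - real n) * (real CARD('v) / 2 - real n + 1)"
      unfolding magnetization_def by (simp add: power2_eq_square algebra_simps)
    show ?thesis unfolding casimir_eq_raise_lower assms(2) total_ladder_zero m by simp
  qed
qed

lemma casimir_value_inj:
  fixes S S' :: real
  assumes "0 \<le> S" "0 \<le> S'" "S * (S + 1) = S' * (S' + 1)"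
  shows "S = S'"
proof -
  have "(S - S') * (S + S' + 1) = 0" using assms(3) by (simp add: algebra_simps)
  then show ?thesis using assms(1,2) by simp
qed

lemma casimir_eigenvalue_spin_space:
  assumes "\<psi> \<in> spin_space S" "casimir \<psi> = (\<lambda>\<eta>. complex_of_real \<mu> * \<psi> \<eta>)" "\<psi> \<noteq> (\<lambda>_. 0)"
  shows "\<mu> = S * (S + 1)"
proof -
  obtain \<eta> where "\<psi> \<eta> \<noteq> 0" using assms(3) by auto
  moreover have "(\<lambda>\<eta>. complex_of_real \<mu> * \<psi> \<eta>) = (\<lambda>\<eta>. complex_of_real (S * (S + 1)) * \<psi> \<eta>)"
    using assms(1,2) unfolding spin_space_def by simp
  then have "complex_of_real \<mu> * \<psi> \<eta> = complex_of_real (S * (S + 1)) * \<psi> \<eta>"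
    by (rule fun_cong)
  ultimately show ?thesis by (metis mult_cancel_right of_real_eq_iff)
qed

text \<open>The two ends of the ladder through \<open>\<phi>\<close> are a highest and a lowest weight vector with
  the same Casimir eigenvalue, which forces them into sectors \<open>a\<close> and \<open>b\<close> with \<open>a + b = N\<close>.\<close>

lemma casimir_eigenvector_multiplet:
  fixes \<phi> :: "('v::finite) state"
  assumes sec: "in_sector n \<phi>" and nz: "\<phi> \<noteq> (\<lambda>_. 0)"
    and eig: "casimir \<phi> = (\<lambda>\<eta>. complex_of_real \<mu> * \<phi> \<eta>)"
  obtains a b where "a \<le> n" "n \<le> b" "a + b = CARD('v)"
    "\<mu> = (real b - real CARD('v) / 2) * (real b - real CARD('v) / 2 + 1)"
    "\<forall>j \<le> b - n. (spin_raise ^^ j) \<phi> \<noteq> (\<lambda>_. 0)"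
    "\<forall>i \<le> n - a. (spin_lower ^^ i) \<phi> \<noteq> (\<lambda>_. 0)"
proof -
  let ?N = "CARD('v)"
  have eig_iter: "casimir ((total_ladder s ^^ j) \<phi>) = (\<lambda>\<eta>. complex_of_real \<mu> * (total_ladder s ^^ j) \<phi> \<eta>)"
    for s j using eig unfolding casimir_eq_perm_op by (rule eigen_total_ladder_iter)
  have nz0: "(total_ladder s ^^ 0) \<phi> \<noteq> (\<lambda>_. 0)" for s
    using nz by simp
  have "(spin_raise ^^ Suc ?N) \<phi> = (\<lambda>_. 0)"
    by (rule in_sector_above_card[OF in_sector_spin_raise_iter[OF sec]]) simp
  then obtain j where j: "\<forall>k \<le> j. (spin_raise ^^ k) \<phi> \<noteq> (\<lambda>_. 0)" "(spin_raise ^^ Suc j) \<phi> = (\<lambda>_. 0)"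
    using ex_least_nat_less[of "\<lambda>j. (spin_raise ^^ j) \<phi> = (\<lambda>_. 0)", OF _ nz0] by blast
  have "(spin_lower ^^ Suc n) \<phi> = (\<lambda>_. 0)"
    using spin_lower_sector_0 in_sector_spin_lower_iter[OF sec, of n] by simp
  then obtain i where i: "\<forall>k \<le> i. (spin_lower ^^ k) \<phi> \<noteq> (\<lambda>_. 0)" "(spin_lower ^^ Suc i) \<phi> = (\<lambda>_. 0)"
    and "i < Suc n"
    using ex_least_nat_less[of "\<lambda>i. (spin_lower ^^ i) \<phi> = (\<lambda>_. 0)", OF _ nz0] by blast
  then have "i \<le> n" by simp
  define A where "A = real ?N / 2 - real (n - i)"
  define B where "B = real (n + j) - real ?N / 2"
  have "(spin_raise ^^ j) \<phi> \<in> spin_space B"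
    unfolding B_def using highest_weight_spin_space[OF in_sector_spin_raise_iter[OF sec]] j(2) by simp
  then have top: "\<mu> = B * (B + 1)"
    using casimir_eigenvalue_spin_space eig_iter j(1) by blast
  have "(spin_lower ^^ i) \<phi> \<in> spin_space A"
    unfolding A_def using lowest_weight_spin_space[OF in_sector_spin_lower_iter[OF sec \<open>i \<le> n\<close>]] i(2) by simp
  then have bottom: "\<mu> = A * (A + 1)"
    using casimir_eigenvalue_spin_space eig_iter i(1) by blast
  have "(B - A) * (B + A + 1) = 0"
    using top bottom by (simp add: algebra_simps)
  moreover have "0 < B + A + 1"
    unfolding A_def B_def by simp
  ultimately have "B = A" by simp
  then have "real ((n - i) + (n + j)) = real ?N"
    unfolding A_def B_def using \<open>i \<le> n\<close> by simp
  then have "(n - i) + (n + j) = ?N"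
    by (simp only: of_nat_eq_iff)
  then show ?thesis
    using that[of "n - i" "n + j"] top i(1) j(1) unfolding B_def by simp
qed

section \<open>Eigenvectors of symmetric operators\<close>

lemma quadratic_nonneg_imp_linear_coeff_zero:
  fixes a b :: real
  assumes "\<And>t. 0 \<le> 2 * t * a + t^2 * b"
  shows "a = 0"
proof (rule ccontr)
  assume a: "a \<noteq> 0"
  define B where "B = \<bar>b\<bar> + 1"
  have B: "B > 0" "\<bar>b\<bar> \<le> B" unfolding B_def by auto
  define t where "t = - a / B"
  have "0 \<le> 2 * t * a + t^2 * b" by (rule assms)
  moreover have "t^2 * b \<le> t^2 * B" using B by (intro mult_left_mono) auto
  moreover have "2 * t * a + t^2 * B = -(a^2) / B"
    unfolding t_def using B by (simp add: field_simps power2_eq_square)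
  moreover have "-(a^2) / B < 0" using a B by simp
  ultimately show False by linarith
qed

lemma symmetric_eigenvectors_orthogonal:
  fixes T :: "'a::real_inner \<Rightarrow> 'a"
  assumes "\<And>x y. inner (T x) y = inner x (T y)"
    and "T x = a *\<^sub>R x" "T y = b *\<^sub>R y" "a \<noteq> b"
  shows "inner x y = 0"
proof -
  have "a * inner x y = b * inner x y"
    using assms(1)[of x y] assms(2,3) by simp
  then show ?thesis using assms(4) by simp
qed

lemma symmetric_eigenvalues_finite:
  fixes T :: "'a::euclidean_space \<Rightarrow> 'a"
  assumes sym: "\<And>x y. inner (T x) y = inner x (T y)"
  shows "finite {\<mu>. \<exists>x. x \<noteq> 0 \<and> T x = \<mu> *\<^sub>R x}"
proof -
  define E where "E = {\<mu>. \<exists>x. x \<noteq> 0 \<and> T x = \<mu> *\<^sub>R x}"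
  define e where "e \<mu> = (SOME x. x \<noteq> 0 \<and> T x = \<mu> *\<^sub>R x)" for \<mu>
  have e: "e \<mu> \<noteq> 0 \<and> T (e \<mu>) = \<mu> *\<^sub>R e \<mu>" if "\<mu> \<in> E" for \<mu>
    using that unfolding E_def e_def by (metis (mono_tags, lifting) mem_Collect_eq someI_ex)
  have "inj_on e E"
  proof (rule inj_onI)
    fix \<mu> \<nu> assume "\<mu> \<in> E" "\<nu> \<in> E" "e \<mu> = e \<nu>"
    then have "\<mu> *\<^sub>R e \<mu> = \<nu> *\<^sub>R e \<mu>" using e by metis
    then show "\<mu> = \<nu>" using e[OF \<open>\<mu> \<in> E\<close>] by (simp add: scaleR_cancel_right)
  qed
  moreover have "pairwise orthogonal (e ` E)"
    unfolding pairwise_def orthogonal_def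
    using symmetric_eigenvectors_orthogonal[OF sym] e by (metis imageE)
  then have "independent (e ` E)"
    using e by (intro pairwise_orthogonal_independent) auto
  then have "finite (e ` E)" using independent_bound by blast
  ultimately show ?thesis
    unfolding E_def[symmetric] using finite_imageD by blast
qed

lemma rayleigh_first_variation:
  fixes T :: "'a::real_inner \<Rightarrow> 'a"
  assumes lin: "linear T" and sym: "\<And>x y. inner (T x) y = inner x (T y)"
    and W: "subspace W" "x0 \<in> W" "h \<in> W"
    and ge: "\<And>v. v \<in> W \<Longrightarrow> \<mu> * inner v v \<le> inner v (T v)"
    and eq: "inner x0 (T x0) = \<mu> * inner x0 x0"
  shows "inner h (T x0 - \<mu> *\<^sub>R x0) = 0"
proof -
  have Tsc: "T (c *\<^sub>R v) = c *\<^sub>R T v" for c v using lin by (simp add: linear_scale)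
  have Tadd: "T (u + v) = T u + T v" for u v using lin by (simp add: linear_add)
  have "0 \<le> 2 * t * (inner h (T x0) - \<mu> * inner h x0) + t^2 * (inner h (T h) - \<mu> * inner h h)" for t
  proof -
    have "x0 + t *\<^sub>R h \<in> W" using W by (simp add: subspace_add subspace_scale)
    then have "\<mu> * inner (x0 + t *\<^sub>R h) (x0 + t *\<^sub>R h) \<le> inner (x0 + t *\<^sub>R h) (T (x0 + t *\<^sub>R h))"
      by (rule ge)
    also have "inner (x0 + t *\<^sub>R h) (x0 + t *\<^sub>R h) = inner x0 x0 + 2 * t * inner h x0 + t^2 * inner h h"
      by (simp add: inner_add_left inner_add_right inner_commute power2_eq_square algebra_simps)
    also have "inner (x0 + t *\<^sub>R h) (T (x0 + t *\<^sub>R h)) =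
        \<mu> * inner x0 x0 + 2 * t * inner h (T x0) + t^2 * inner h (T h)"
      using sym[of x0 h] eq unfolding Tadd Tsc
      by (simp add: inner_add_left inner_add_right inner_commute power2_eq_square algebra_simps)
    finally have "\<mu> * (inner x0 x0 + 2 * t * inner h x0 + t^2 * inner h h)
        \<le> \<mu> * inner x0 x0 + 2 * t * inner h (T x0) + t^2 * inner h (T h)" .
    moreover have "2 * t * (inner h (T x0) - \<mu> * inner h x0) + t^2 * (inner h (T h) - \<mu> * inner h h) =
        (\<mu> * inner x0 x0 + 2 * t * inner h (T x0) + t^2 * inner h (T h))
        - \<mu> * (inner x0 x0 + 2 * t * inner h x0 + t^2 * inner h h)"
      by (simp add: algebra_simps)
    ultimately show ?thesis by linarith
  qed
  then have "inner h (T x0) - \<mu> * inner h x0 = 0"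
    by (rule quadratic_nonneg_imp_linear_coeff_zero)
  then show ?thesis by (simp add: inner_diff_right)
qed

lemma rayleigh_minimizer_is_eigenvector:
  fixes T :: "'a::real_inner \<Rightarrow> 'a"
  assumes lin: "linear T" and sym: "\<And>x y. inner (T x) y = inner x (T y)"
    and W: "subspace W" and inv: "\<And>x. x \<in> W \<Longrightarrow> T x \<in> W"
    and x0: "x0 \<in> W" "norm x0 = 1"
    and min: "\<And>v. v \<in> W \<Longrightarrow> norm v = 1 \<Longrightarrow> inner x0 (T x0) \<le> inner v (T v)"
  shows "T x0 = inner x0 (T x0) *\<^sub>R x0"
proof -
  define \<mu> where "\<mu> = inner x0 (T x0)"
  have ge: "\<mu> * inner v v \<le> inner v (T v)" if "v \<in> W" for v
  proof (cases "v = 0")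
    case True then show ?thesis using lin by (simp add: linear_0)
  next
    case False
    have "\<mu> \<le> inner (v /\<^sub>R norm v) (T (v /\<^sub>R norm v))"
      unfolding \<mu>_def using that False W by (intro min) (auto simp: subspace_scale)
    also have "\<dots> = inner v (T v) / (norm v)^2"
      using lin False by (simp add: linear_scale power2_eq_square field_simps)
    finally show ?thesis using False by (simp add: field_simps power2_norm_eq_inner)
  qed
  have "inner x0 x0 = 1" using x0(2) by (metis power2_norm_eq_inner power_one)
  then have eq: "inner x0 (T x0) = \<mu> * inner x0 x0" unfolding \<mu>_def by simp
  have "T x0 - \<mu> *\<^sub>R x0 \<in> W" using W x0(1) inv by (simp add: subspace_diff subspace_scale)
  then have "inner (T x0 - \<mu> *\<^sub>R x0) (T x0 - \<mu> *\<^sub>R x0) = 0"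
    using rayleigh_first_variation[OF lin sym W x0(1) _ ge eq] by blast
  then show ?thesis unfolding \<mu>_def by simp
qed

lemma symmetric_has_eigenvector_in_invariant_subspace:
  fixes T :: "'a::euclidean_space \<Rightarrow> 'a"
  assumes lin: "linear T" and sym: "\<And>x y. inner (T x) y = inner x (T y)"
    and W: "subspace W" and inv: "\<And>x. x \<in> W \<Longrightarrow> T x \<in> W" and w: "w \<in> W" "w \<noteq> 0"
  shows "\<exists>x\<in>W. x \<noteq> 0 \<and> (\<exists>\<mu>. T x = \<mu> *\<^sub>R x)"
proof -
  define K where "K = sphere 0 1 \<inter> W"
  have "compact K" unfolding K_def
    by (intro compact_Int_closed compact_sphere closed_subspace W)
  moreover have "w /\<^sub>R norm w \<in> K" unfolding K_def using w W
    by (auto simp: subspace_scale)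
  then have "K \<noteq> {}" by auto
  moreover have "continuous_on K (\<lambda>x. inner x (T x))"
    using lin by (intro continuous_intros linear_continuous_on) (simp add: linear_conv_bounded_linear)
  ultimately obtain x0 where x0: "x0 \<in> K" "\<And>y. y \<in> K \<Longrightarrow> inner x0 (T x0) \<le> inner y (T y)"
    using continuous_attains_inf by metis
  have "x0 \<in> W" "norm x0 = 1" using x0(1) unfolding K_def by auto
  moreover have "T x0 = inner x0 (T x0) *\<^sub>R x0"
    using rayleigh_minimizer_is_eigenvector[OF lin sym W inv] x0 calculation unfolding K_def by auto
  ultimately show ?thesis by (metis norm_zero zero_neq_one)
qed

section \<open>Permutation operators are symmetric\<close>

text \<open>States are vectors of the real Euclidean space \<open>complex^('v \<Rightarrow> bool)\<close>, whose inner
  product is the real part of the Hermitian one; eigenvalues are taken to be real.\<close>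

definition state_vec :: "('v::finite) state \<Rightarrow> complex^('v \<Rightarrow> bool)" where
  "state_vec \<psi> = (\<chi> \<eta>. \<psi> \<eta>)"

definition perm_op_vec :: "real \<Rightarrow> ('v::finite \<Rightarrow> 'v \<Rightarrow> real) \<Rightarrow> complex^('v \<Rightarrow> bool) \<Rightarrow> complex^('v \<Rightarrow> bool)" where
  "perm_op_vec a b v = state_vec (perm_op a b (vec_nth v))"

lemma vec_nth_state_vec [simp]: "vec_nth (state_vec \<psi>) = \<psi>"
  by (simp add: state_vec_def fun_eq_iff)

lemma state_vec_vec_nth [simp]: "state_vec (vec_nth v) = v"
  by (simp add: state_vec_def vec_eq_iff)

lemma state_vec_eq_0_iff: "state_vec \<psi> = 0 \<longleftrightarrow> \<psi> = (\<lambda>_. 0)"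
  by (auto simp: state_vec_def vec_eq_iff fun_eq_iff)

lemma inner_state_vec: "inner (state_vec \<psi>) (state_vec \<phi>) = (\<Sum>\<eta>\<in>UNIV. inner (\<psi> \<eta>) (\<phi> \<eta>))"
  by (simp add: state_vec_def inner_vec_def)

lemma vec_nth_scaleR_complex: "vec_nth (c *\<^sub>R v) = (\<lambda>\<eta>. complex_of_real c * (v :: complex^'n) $ \<eta>)"
  by (rule ext, subst vector_scaleR_component) (rule scaleR_conv_of_real)

lemma vec_nth_zero: "vec_nth 0 = (\<lambda>_. 0)"
  by (simp add: fun_eq_iff)

lemma vec_nth_add: "vec_nth (u + v) = (\<lambda>\<eta>. u $ \<eta> + v $ \<eta>)"
  by (simp add: fun_eq_iff)

lemma inner_of_real_mult_left: "inner (complex_of_real r * z) w = r * inner z w"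
  by (simp add: inner_complex_def algebra_simps)

lemma sum_inner_perm_op_left:
  "(\<Sum>\<eta>\<in>UNIV. inner (perm_op a b \<psi> \<eta>) (\<phi> \<eta>)) = a * (\<Sum>\<eta>\<in>UNIV. inner (\<psi> \<eta>) (\<phi> \<eta>)) +
     (\<Sum>x\<in>UNIV. \<Sum>y\<in>UNIV. b x y * (\<Sum>\<eta>\<in>UNIV. inner (\<psi> (swap_cfg \<eta> x y)) (\<phi> \<eta>)))"
proof -
  have "(\<Sum>\<eta>\<in>UNIV. inner (perm_op a b \<psi> \<eta>) (\<phi> \<eta>)) = (\<Sum>\<eta>\<in>UNIV. a * inner (\<psi> \<eta>) (\<phi> \<eta>) +
      (\<Sum>x\<in>UNIV. \<Sum>y\<in>UNIV. b x y * inner (\<psi> (swap_cfg \<eta> x y)) (\<phi> \<eta>)))"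
    by (simp add: perm_op_def inner_add_left inner_sum_left inner_of_real_mult_left)
  also have "\<dots> = a * (\<Sum>\<eta>\<in>UNIV. inner (\<psi> \<eta>) (\<phi> \<eta>)) +
      (\<Sum>\<eta>\<in>UNIV. \<Sum>x\<in>UNIV. \<Sum>y\<in>UNIV. b x y * inner (\<psi> (swap_cfg \<eta> x y)) (\<phi> \<eta>))"
    by (simp only: sum.distrib sum_distrib_left)
  also have "\<dots> = a * (\<Sum>\<eta>\<in>UNIV. inner (\<psi> \<eta>) (\<phi> \<eta>)) +
      (\<Sum>x\<in>UNIV. \<Sum>y\<in>UNIV. b x y * (\<Sum>\<eta>\<in>UNIV. inner (\<psi> (swap_cfg \<eta> x y)) (\<phi> \<eta>)))"
    by (subst sum_swap3) (simp only: sum_distrib_left)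
  finally show ?thesis .
qed

lemma perm_op_symmetric:
  "inner (state_vec (perm_op a b \<psi>)) (state_vec \<phi>) = inner (state_vec \<psi>) (state_vec (perm_op a b \<phi>))"
proof -
  have swap: "(\<Sum>\<eta>\<in>UNIV. inner (\<psi> (swap_cfg \<eta> x y)) (\<phi> \<eta>)) = (\<Sum>\<eta>\<in>UNIV. inner (\<phi> (swap_cfg \<eta> x y)) (\<psi> \<eta>))"
    for x y
    using sum_swap_cfg[of "\<lambda>\<eta>. inner (\<phi> (swap_cfg \<eta> x y)) (\<psi> \<eta>)" x y] by (simp add: inner_commute)
  have "(\<Sum>\<eta>\<in>UNIV. inner (\<psi> \<eta>) (perm_op a b \<phi> \<eta>)) = (\<Sum>\<eta>\<in>UNIV. inner (perm_op a b \<phi> \<eta>) (\<psi> \<eta>))"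
    "(\<Sum>\<eta>\<in>UNIV. inner (\<phi> \<eta>) (\<psi> \<eta>)) = (\<Sum>\<eta>\<in>UNIV. inner (\<psi> \<eta>) (\<phi> \<eta>))"
    by (rule sum.cong[OF refl], rule inner_commute)+
  then show ?thesis
    unfolding inner_state_vec sum_inner_perm_op_left swap by simp
qed

lemma perm_op_vec_linear: "linear (perm_op_vec a b :: complex^('v::finite \<Rightarrow> bool) \<Rightarrow> _)"
proof (rule linearI)
  fix u v :: "complex^('v \<Rightarrow> bool)"
  show "perm_op_vec a b (u + v) = perm_op_vec a b u + perm_op_vec a b v"
    by (simp add: perm_op_vec_def vec_nth_add perm_op_add state_vec_def vec_eq_iff)
next
  fix c :: real and u :: "complex^('v \<Rightarrow> bool)"
  show "perm_op_vec a b (c *\<^sub>R u) = c *\<^sub>R perm_op_vec a b u"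
    by (simp add: perm_op_vec_def vec_nth_scaleR_complex perm_op_scale state_vec_def vec_eq_iff)
qed

lemma perm_op_vec_symmetric: "inner (perm_op_vec a b u) v = inner u (perm_op_vec a b v)"
  using perm_op_symmetric[of a b "vec_nth u" "vec_nth v"] by (simp add: perm_op_vec_def)

lemma state_vec_inject: "state_vec \<psi> = state_vec \<phi> \<longleftrightarrow> \<psi> = \<phi>"
  by (metis vec_nth_state_vec)

lemma perm_op_vec_eigen:
  "perm_op a b \<psi> = (\<lambda>\<eta>. complex_of_real E * \<psi> \<eta>) \<longleftrightarrow> perm_op_vec a b (state_vec \<psi>) = E *\<^sub>R state_vec \<psi>"
proof -
  have "E *\<^sub>R state_vec \<psi> = state_vec (\<lambda>\<eta>. complex_of_real E * \<psi> \<eta>)"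
    by (simp add: vec_eq_iff state_vec_def) (simp add: scaleR_conv_of_real)
  then show ?thesis
    unfolding perm_op_vec_def vec_nth_state_vec by (simp add: state_vec_inject)
qed

lemma perm_op_eigenvalues_finite:
  "finite {E. \<exists>\<psi>::('v::finite) state. \<psi> \<noteq> (\<lambda>_. 0) \<and> perm_op a b \<psi> = (\<lambda>\<eta>. complex_of_real E * \<psi> \<eta>)}"
proof (rule finite_subset)
  show "{E. \<exists>\<psi>::'v state. \<psi> \<noteq> (\<lambda>_. 0) \<and> perm_op a b \<psi> = (\<lambda>\<eta>. complex_of_real E * \<psi> \<eta>)}
      \<subseteq> {E. \<exists>x. x \<noteq> 0 \<and> perm_op_vec a b x = E *\<^sub>R x}"
    using perm_op_vec_eigen state_vec_eq_0_iff by fastforce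
  show "finite {E. \<exists>x. x \<noteq> 0 \<and> perm_op_vec a b x = E *\<^sub>R (x :: complex^('v \<Rightarrow> bool))}"
    by (rule symmetric_eigenvalues_finite[OF perm_op_vec_symmetric])
qed

lemma perm_op_has_eigenvector:
  fixes P :: "('v::finite) state \<Rightarrow> bool"
  assumes add: "\<And>\<phi> \<psi>. P \<phi> \<Longrightarrow> P \<psi> \<Longrightarrow> P (\<lambda>\<eta>. \<phi> \<eta> + \<psi> \<eta>)"
    and scale: "\<And>c \<psi>. P \<psi> \<Longrightarrow> P (\<lambda>\<eta>. complex_of_real c * \<psi> \<eta>)"
    and zero: "P (\<lambda>_. 0)" and inv: "\<And>\<psi>. P \<psi> \<Longrightarrow> P (perm_op a b \<psi>)"
    and "P \<psi>" "\<psi> \<noteq> (\<lambda>_. 0)"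
  obtains \<phi> E where "P \<phi>" "\<phi> \<noteq> (\<lambda>_. 0)" "perm_op a b \<phi> = (\<lambda>\<eta>. complex_of_real E * \<phi> \<eta>)"
proof -
  define W where "W = {v. P (vec_nth v)}"
  have "subspace W"
    unfolding subspace_def W_def
    using zero add scale by (simp add: vec_nth_scaleR_complex vec_nth_add vec_nth_zero)
  moreover have "\<And>v. v \<in> W \<Longrightarrow> perm_op_vec a b v \<in> W"
    unfolding W_def perm_op_vec_def using inv by simp
  moreover have "state_vec \<psi> \<in> W" "state_vec \<psi> \<noteq> 0"
    unfolding W_def using assms(5,6) state_vec_eq_0_iff by auto
  ultimately obtain v E where "v \<in> W" "v \<noteq> 0" "perm_op_vec a b v = E *\<^sub>R v"
    using symmetric_has_eigenvector_in_invariant_subspace[OF perm_op_vec_linear perm_op_vec_symmetric]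
    by blast
  moreover have "P (vec_nth v)"
    using \<open>v \<in> W\<close> unfolding W_def by simp
  moreover have "vec_nth v \<noteq> (\<lambda>_. 0)"
    using \<open>v \<noteq> 0\<close> state_vec_eq_0_iff[of "vec_nth v"] by simp
  moreover have "perm_op a b (vec_nth v) = (\<lambda>\<eta>. complex_of_real E * vec_nth v \<eta>)"
    using perm_op_vec_eigen[of a b "vec_nth v" E] \<open>perm_op_vec a b v = E *\<^sub>R v\<close> by simp
  ultimately show ?thesis
    using that by blast
qed

lemma perm_op_casimir_joint_eigenvector:
  fixes \<psi> :: "('v::finite) state" and b :: "'v \<Rightarrow> 'v \<Rightarrow> real"
  assumes "in_sector n \<psi>" "\<psi> \<noteq> (\<lambda>_. 0)" "perm_op a b \<psi> = (\<lambda>\<eta>. complex_of_real l * \<psi> \<eta>)"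
  obtains \<phi> \<mu> where "in_sector n \<phi>" "\<phi> \<noteq> (\<lambda>_. 0)" "perm_op a b \<phi> = (\<lambda>\<eta>. complex_of_real l * \<phi> \<eta>)"
    "casimir \<phi> = (\<lambda>\<eta>. complex_of_real \<mu> * \<phi> \<eta>)"
proof -
  let ?P = "\<lambda>\<phi>::'v state. in_sector n \<phi> \<and> perm_op a b \<phi> = (\<lambda>\<eta>. complex_of_real l * \<phi> \<eta>)"
  let ?C = "perm_op (real CARD('v) / 2 - real CARD('v) ^ 2 / 4) (\<lambda>_ _. 1/2)"
  have add: "?P (\<lambda>\<eta>. \<phi> \<eta> + \<psi> \<eta>)" if "?P \<phi>" "?P \<psi>" for \<phi> \<psi>
    using that by (simp add: in_sector_add perm_op_add distrib_left)
  have scale: "?P (\<lambda>\<eta>. complex_of_real c * \<psi> \<eta>)" if "?P \<psi>" for c \<psi>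
    using that by (simp add: in_sector_scale perm_op_scale mult.left_commute)
  have zero: "?P (\<lambda>_. 0)"
    by (simp add: in_sector_zero perm_op_zero)
  have inv: "?P (?C \<psi>)" if "?P \<psi>" for \<psi>
    using that in_sector_perm_op[of n \<psi>] perm_op_casimir[of a b \<psi>]
    unfolding casimir_eq_perm_op by (simp add: perm_op_scale)
  have "?P \<psi>" using assms(1,3) by blast
  obtain \<phi> \<mu> where "?P \<phi>" "\<phi> \<noteq> (\<lambda>_. 0)" "?C \<phi> = (\<lambda>\<eta>. complex_of_real \<mu> * \<phi> \<eta>)"
    by (rule perm_op_has_eigenvector[where P = ?P, OF add scale zero inv \<open>?P \<psi>\<close> assms(2)])
  then show ?thesis
    using that unfolding casimir_eq_perm_op by blast
qed

lemma perm_op_lowest_weight_eigenvector: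
  fixes \<psi> :: "('v::finite) state" and b :: "'v \<Rightarrow> 'v \<Rightarrow> real"
  assumes "in_sector n \<psi>" "spin_lower \<psi> = (\<lambda>_. 0)" "\<psi> \<noteq> (\<lambda>_. 0)"
  obtains \<phi> E where "in_sector n \<phi>" "spin_lower \<phi> = (\<lambda>_. 0)" "\<phi> \<noteq> (\<lambda>_. 0)"
    "perm_op a b \<phi> = (\<lambda>\<eta>. complex_of_real E * \<phi> \<eta>)"
proof -
  let ?P = "\<lambda>\<phi>::'v state. in_sector n \<phi> \<and> spin_lower \<phi> = (\<lambda>_. 0)"
  have add: "?P (\<lambda>\<eta>. \<phi> \<eta> + \<psi> \<eta>)" if "?P \<phi>" "?P \<psi>" for \<phi> \<psi>
    using that by (simp add: in_sector_add total_ladder_add)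
  have scale: "?P (\<lambda>\<eta>. complex_of_real c * \<psi> \<eta>)" if "?P \<psi>" for c \<psi>
    using that by (simp add: in_sector_scale total_ladder_scale)
  have zero: "?P (\<lambda>_. 0)"
    by (simp add: in_sector_zero total_ladder_zero)
  have inv: "?P (perm_op a b \<psi>)" if "?P \<psi>" for \<psi>
    using that by (simp add: in_sector_perm_op total_ladder_perm_op perm_op_zero)
  have "?P \<psi>" using assms(1,2) by blast
  obtain \<phi> E where "?P \<phi>" "\<phi> \<noteq> (\<lambda>_. 0)" "perm_op a b \<phi> = (\<lambda>\<eta>. complex_of_real E * \<phi> \<eta>)"
    by (rule perm_op_has_eigenvector[where P = ?P, OF add scale zero inv \<open>?P \<psi>\<close> assms(3)])
  then show ?thesis
    using that by blast
qed

section \<open>The Heisenberg Hamiltonian and the exclusion process\<close>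

locale heisenberg =
  fixes J :: "'v::finite \<Rightarrow> 'v \<Rightarrow> real"
  assumes no_self_coupling: "\<And>x. J x x = 0"
begin

lemma heis_ham_perm_op: "heis_ham J = perm_op (\<Sum>x\<in>UNIV. \<Sum>y\<in>UNIV. J x y / 4) (\<lambda>x y. - J x y / 4)"
  using heis_ham_eq_perm_op no_self_coupling by blast

lemma heis_ham_of_real:
  "heis_ham J (\<lambda>\<eta>. complex_of_real (f \<eta>)) = (\<lambda>\<eta>. complex_of_real (ssep_gen (\<lambda>x y. J x y / 2) f \<eta>))"
proof
  fix \<eta>
  have "ssep_gen (\<lambda>x y. J x y / 2) f \<eta> =
      (\<Sum>x\<in>UNIV. \<Sum>y\<in>UNIV. J x y / 4) * f \<eta> + (\<Sum>x\<in>UNIV. \<Sum>y\<in>UNIV. (- J x y / 4) * f (swap_cfg \<eta> x y))"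
    unfolding ssep_gen_def sum_distrib_left sum_distrib_right sum.distrib[symmetric]
    by (intro sum.cong refl) (simp add: algebra_simps)
  then show "heis_ham J (\<lambda>\<eta>. complex_of_real (f \<eta>)) \<eta> = complex_of_real (ssep_gen (\<lambda>x y. J x y / 2) f \<eta>)"
    unfolding heis_ham_perm_op perm_op_def by simp
qed

lemma heis_ham_Re: "heis_ham J (\<lambda>\<eta>. complex_of_real (Re (\<psi> \<eta>))) = (\<lambda>\<eta>. complex_of_real (Re (heis_ham J \<psi> \<eta>)))"
  unfolding heis_ham_perm_op by (rule perm_op_Re)

lemma heis_ham_Im: "heis_ham J (\<lambda>\<eta>. complex_of_real (Im (\<psi> \<eta>))) = (\<lambda>\<eta>. complex_of_real (Im (heis_ham J \<psi> \<eta>)))"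
  unfolding heis_ham_perm_op by (rule perm_op_Im)

lemma heis_ham_extreme_sector:
  "in_sector n \<psi> \<Longrightarrow> n = 0 \<or> n = CARD('v) \<Longrightarrow> heis_ham J \<psi> = (\<lambda>_. 0)"
  unfolding heis_ham_perm_op by (simp add: perm_op_extreme_sector sum_negf)

definition sector_eigenvalue :: "nat \<Rightarrow> real \<Rightarrow> bool" where
  "sector_eigenvalue n l \<longleftrightarrow>
     (\<exists>\<psi>::'v state. in_sector n \<psi> \<and> \<psi> \<noteq> (\<lambda>_. 0) \<and> heis_ham J \<psi> = (\<lambda>\<eta>. complex_of_real l * \<psi> \<eta>))"

text \<open>A complex eigenvector of the real operator \<open>heis_ham J\<close> has a nonzero real or imaginary part,
  which is an eigenfunction of the exclusion process.\<close>

lemma ssep_eigenvalue_iff_sector_eigenvalue: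
  "(\<exists>f\<in>n_particle_space n. f \<noteq> (\<lambda>_. 0) \<and> ssep_gen (\<lambda>x y. J x y / 2) f = (\<lambda>\<eta>. l * f \<eta>))
     \<longleftrightarrow> sector_eigenvalue n l"
proof
  assume "\<exists>f\<in>n_particle_space n. f \<noteq> (\<lambda>_. 0) \<and> ssep_gen (\<lambda>x y. J x y / 2) f = (\<lambda>\<eta>. l * f \<eta>)"
  then obtain f where "f \<in> n_particle_space n" "f \<noteq> (\<lambda>_. 0)" "ssep_gen (\<lambda>x y. J x y / 2) f = (\<lambda>\<eta>. l * f \<eta>)"
    by blast
  then show "sector_eigenvalue n l"
    unfolding sector_eigenvalue_def
    by (intro exI[of _ "\<lambda>\<eta>. complex_of_real (f \<eta>)"])
       (auto simp: heis_ham_of_real in_sector_def n_particle_space_def up_count_def fun_eq_iff)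
next
  assume "sector_eigenvalue n l"
  then obtain \<psi> :: "'v state" where \<psi>: "in_sector n \<psi>" "\<psi> \<noteq> (\<lambda>_. 0)"
      "heis_ham J \<psi> = (\<lambda>\<eta>. complex_of_real l * \<psi> \<eta>)"
    unfolding sector_eigenvalue_def by blast
  have eigen: "f \<in> n_particle_space n \<and> ssep_gen (\<lambda>x y. J x y / 2) f = (\<lambda>\<eta>. l * f \<eta>)"
    if "f = (\<lambda>\<eta>. Re (\<psi> \<eta>)) \<or> f = (\<lambda>\<eta>. Im (\<psi> \<eta>))" for f
  proof
    have "\<psi> \<eta> \<noteq> 0" if "f \<eta> \<noteq> 0" for \<eta>
      using that \<open>f = (\<lambda>\<eta>. Re (\<psi> \<eta>)) \<or> f = (\<lambda>\<eta>. Im (\<psi> \<eta>))\<close> by auto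
    then show "f \<in> n_particle_space n"
      using \<psi>(1) unfolding n_particle_space_def in_sector_def up_count_def by blast
    have "heis_ham J (\<lambda>\<eta>. complex_of_real (f \<eta>)) = (\<lambda>\<eta>. complex_of_real (l * f \<eta>))"
      using that by (auto simp: heis_ham_Re heis_ham_Im \<psi>(3))
    then show "ssep_gen (\<lambda>x y. J x y / 2) f = (\<lambda>\<eta>. l * f \<eta>)"
      unfolding heis_ham_of_real by (simp add: fun_eq_iff del: of_real_mult)
  qed
  have "(\<lambda>\<eta>. Re (\<psi> \<eta>)) \<noteq> (\<lambda>_. 0) \<or> (\<lambda>\<eta>. Im (\<psi> \<eta>)) \<noteq> (\<lambda>_. 0)"
    using \<psi>(2) by (auto simp: fun_eq_iff complex_eq_iff)
  then show "\<exists>f\<in>n_particle_space n. f \<noteq> (\<lambda>_. 0) \<and> ssep_gen (\<lambda>x y. J x y / 2) f = (\<lambda>\<eta>. l * f \<eta>)"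
    using eigen by blast
qed

lemma ssep_gap_eq_Min: "ssep_gap (\<lambda>x y. J x y / 2) n = Min {l. 0 < l \<and> sector_eigenvalue n l}"
  unfolding ssep_gap_def ssep_eigenvalue_iff_sector_eigenvalue ..

lemma finite_heis_ham_eigenvalues:
  "finite {E. \<exists>\<psi>::'v state. \<psi> \<noteq> (\<lambda>_. 0) \<and> heis_ham J \<psi> = (\<lambda>\<eta>. complex_of_real E * \<psi> \<eta>)}"
  unfolding heis_ham_perm_op by (rule perm_op_eigenvalues_finite)

lemma finite_sector_eigenvalues: "finite {l. P l \<and> sector_eigenvalue n l}"
  by (rule finite_subset[OF _ finite_heis_ham_eigenvalues]) (auto simp: sector_eigenvalue_def)

lemma sector_eigenvalue_extreme: "sector_eigenvalue n l \<Longrightarrow> n = 0 \<or> n = CARD('v) \<Longrightarrow> l = 0"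
  unfolding sector_eigenvalue_def using heis_ham_extreme_sector by (fastforce simp: fun_eq_iff)

lemma joint_eigenvector_multiplet:
  fixes \<psi> :: "'v state"
  assumes sec: "in_sector n \<psi>" and nz: "\<psi> \<noteq> (\<lambda>_. 0)"
    and eH: "heis_ham J \<psi> = (\<lambda>\<eta>. complex_of_real l * \<psi> \<eta>)"
    and eC: "casimir \<psi> = (\<lambda>\<eta>. complex_of_real \<mu> * \<psi> \<eta>)"
  obtains a b where "a \<le> n" "n \<le> b" "a + b = CARD('v)"
    "\<mu> = (real b - real CARD('v) / 2) * (real b - real CARD('v) / 2 + 1)"
    "\<And>k. a \<le> k \<Longrightarrow> k \<le> b \<Longrightarrow> sector_eigenvalue k l"
proof -
  obtain a b where ab: "a \<le> n" "n \<le> b" "a + b = CARD('v)"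
    "\<mu> = (real b - real CARD('v) / 2) * (real b - real CARD('v) / 2 + 1)"
    "\<forall>j \<le> b - n. (spin_raise ^^ j) \<psi> \<noteq> (\<lambda>_. 0)" "\<forall>i \<le> n - a. (spin_lower ^^ i) \<psi> \<noteq> (\<lambda>_. 0)"
    using casimir_eigenvector_multiplet[OF sec nz eC] by blast
  have eH_iter: "heis_ham J ((total_ladder s ^^ j) \<psi>) = (\<lambda>\<eta>. complex_of_real l * (total_ladder s ^^ j) \<psi> \<eta>)"
    for s j using eH unfolding heis_ham_perm_op by (rule eigen_total_ladder_iter)
  have "sector_eigenvalue k l" if "a \<le> k" "k \<le> b" for k
  proof (cases "n \<le> k")
    case True
    have "in_sector k ((spin_raise ^^ (k - n)) \<psi>)"
      using in_sector_spin_raise_iter[OF sec, of "k - n"] True by simp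
    moreover have "(spin_raise ^^ (k - n)) \<psi> \<noteq> (\<lambda>_. 0)"
      using ab(5) \<open>k \<le> b\<close> by simp
    ultimately show ?thesis
      unfolding sector_eigenvalue_def using eH_iter by blast
  next
    case False
    have "in_sector k ((spin_lower ^^ (n - k)) \<psi>)"
      using in_sector_spin_lower_iter[OF sec, of "n - k"] False by simp
    moreover have "(spin_lower ^^ (n - k)) \<psi> \<noteq> (\<lambda>_. 0)"
      using ab(6) \<open>a \<le> k\<close> by simp
    ultimately show ?thesis
      unfolding sector_eigenvalue_def using eH_iter by blast
  qed
  then show ?thesis
    using that ab(1-4) by blast
qed

lemma spin_eigenvector_multiplet:
  assumes "0 \<le> S" "\<psi> \<in> spin_space S" "\<psi> \<noteq> (\<lambda>_. 0)"
    and eH: "heis_ham J \<psi> = (\<lambda>\<eta>. complex_of_real E * \<psi> \<eta>)"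
  obtains a b where "real a = real CARD('v) / 2 - S" "real b = real CARD('v) / 2 + S"
    "\<And>k. a \<le> k \<Longrightarrow> k \<le> b \<Longrightarrow> sector_eigenvalue k E"
proof -
  obtain n where nz: "sector_proj n \<psi> \<noteq> (\<lambda>_. 0)"
    using sector_proj_nonzero assms(3) by blast
  have "heis_ham J (sector_proj n \<psi>) = (\<lambda>\<eta>. complex_of_real E * sector_proj n \<psi> \<eta>)"
    using eH unfolding heis_ham_perm_op by (simp add: perm_op_sector_proj sector_proj_scale)
  moreover have "casimir (sector_proj n \<psi>) = (\<lambda>\<eta>. complex_of_real (S * (S + 1)) * sector_proj n \<psi> \<eta>)"
    using assms(2) unfolding spin_space_def casimir_eq_perm_op by (simp add: perm_op_sector_proj sector_proj_scale)
  ultimately obtain a b where ab: "a \<le> n" "n \<le> b" "a + b = CARD('v)"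
    "S * (S + 1) = (real b - real CARD('v) / 2) * (real b - real CARD('v) / 2 + 1)"
    "\<And>k. a \<le> k \<Longrightarrow> k \<le> b \<Longrightarrow> sector_eigenvalue k E"
    using joint_eigenvector_multiplet[OF in_sector_sector_proj nz] by metis
  have "real a + real b = real CARD('v)" "real a \<le> real b"
    using ab(1-3) by (metis of_nat_add, simp)
  then have "S = real b - real CARD('v) / 2"
    using casimir_value_inj[OF assms(1) _ ab(4)] by linarith
  then have "real a = real CARD('v) / 2 - S" "real b = real CARD('v) / 2 + S"
    using \<open>real a + real b = real CARD('v)\<close> by linarith+
  then show ?thesis
    using that ab(5) by blast
qed

lemma sector_eigenvalue_joint_eigenvector:
  assumes "sector_eigenvalue n l"
  obtains \<phi> :: "'v state" and \<mu> where "in_sector n \<phi>" "\<phi> \<noteq> (\<lambda>_. 0)"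
    "heis_ham J \<phi> = (\<lambda>\<eta>. complex_of_real l * \<phi> \<eta>)" "casimir \<phi> = (\<lambda>\<eta>. complex_of_real \<mu> * \<phi> \<eta>)"
proof -
  obtain \<psi> :: "'v state" where \<psi>: "in_sector n \<psi>" "\<psi> \<noteq> (\<lambda>_. 0)"
    "heis_ham J \<psi> = (\<lambda>\<eta>. complex_of_real l * \<psi> \<eta>)"
    using assms unfolding sector_eigenvalue_def by blast
  show ?thesis
    by (rule perm_op_casimir_joint_eigenvector[OF \<psi>(1,2) \<psi>(3)[unfolded heis_ham_perm_op]])
       (rule that[unfolded heis_ham_perm_op])
qed

lemma top_spin_energy_eq_0:
  assumes "\<psi> \<in> spin_space (real CARD('v) / 2)" "\<psi> \<noteq> (\<lambda>_. 0)"
    and "heis_ham J \<psi> = (\<lambda>\<eta>. complex_of_real E * \<psi> \<eta>)"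
  shows "E = 0"
proof -
  obtain a b where "real a = 0" "real b = real CARD('v)" "\<And>k. a \<le> k \<Longrightarrow> k \<le> b \<Longrightarrow> sector_eigenvalue k E"
    using spin_eigenvector_multiplet[OF _ assms] by auto
  then have "sector_eigenvalue CARD('v) E" by simp
  then show ?thesis by (rule sector_eigenvalue_extreme) simp
qed

lemma min_energy_top_spin:
  "spin_space (real CARD('v) / 2) \<noteq> {(\<lambda>_. 0) :: 'v state}"
  "min_energy (heis_ham J) (real CARD('v) / 2) = 0"
proof -
  define \<psi> :: "'v state" where "\<psi> = (\<lambda>\<eta>. if \<eta> = (\<lambda>_. True) then 1 else 0)"
  have sec: "in_sector CARD('v) \<psi>"
    unfolding in_sector_def \<psi>_def by (simp add: up_count_eq_card_iff)
  have "spin_raise \<psi> = (\<lambda>_. 0)"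
    by (rule in_sector_above_card[OF in_sector_spin_raise[OF sec]]) simp
  then have "\<psi> \<in> spin_space (real CARD('v) / 2)"
    using highest_weight_spin_space[OF sec] by simp
  moreover have "\<psi> \<noteq> (\<lambda>_. 0)"
    unfolding \<psi>_def by (auto simp: fun_eq_iff)
  moreover have "heis_ham J \<psi> = (\<lambda>\<eta>. complex_of_real 0 * \<psi> \<eta>)"
    using heis_ham_extreme_sector[OF sec] by simp
  ultimately have "{E. \<exists>\<phi>\<in>spin_space (real CARD('v) / 2). \<phi> \<noteq> (\<lambda>_. 0) \<and>
      heis_ham J \<phi> = (\<lambda>\<eta>. complex_of_real E * \<phi> \<eta>)} = {0}"
    using top_spin_energy_eq_0 by blast
  then show "min_energy (heis_ham J) (real CARD('v) / 2) = 0"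
    unfolding min_energy_def by simp
  show "spin_space (real CARD('v) / 2) \<noteq> {(\<lambda>_. 0) :: 'v state}"
    using \<open>\<psi> \<in> spin_space _\<close> \<open>\<psi> \<noteq> (\<lambda>_. 0)\<close> by blast
qed

lemma second_spin_eigenvector:
  assumes "2 \<le> CARD('v)"
  obtains \<psi> :: "'v state" and E where "\<psi> \<in> spin_space (real CARD('v) / 2 - 1)" "\<psi> \<noteq> (\<lambda>_. 0)"
    "heis_ham J \<psi> = (\<lambda>\<eta>. complex_of_real E * \<psi> \<eta>)"
proof -
  obtain u v :: 'v where "u \<noteq> v"
    using assms card_le_Suc0_iff_eq[of "UNIV :: 'v set"] by fastforce
  define single :: "'v \<Rightarrow> 'v \<Rightarrow> bool" where "single w = (\<lambda>x. x = w)" for w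
  have single_inj: "single w = single w' \<longleftrightarrow> w = w'" for w w'
    unfolding single_def by (auto simp: fun_eq_iff)
  define \<psi>0 :: "'v state" where
    "\<psi>0 = (\<lambda>\<eta>. of_bool (\<eta> = single u) - of_bool (\<eta> = single v))"
  have sec: "in_sector 1 \<psi>0"
    unfolding in_sector_def \<psi>0_def by (auto simp: up_count_def single_def)
  have "\<psi>0 (single u) \<noteq> 0"
    unfolding \<psi>0_def using \<open>u \<noteq> v\<close> single_inj by simp
  then have nz: "\<psi>0 \<noteq> (\<lambda>_. 0)" by auto
  have "spin_lower \<psi>0 \<eta> = 0" for \<eta>
  proof (rule ccontr)
    assume ne: "spin_lower \<psi>0 \<eta> \<noteq> 0"
    then have "up_count \<eta> = 0"
      using spin_lower_nonzero_sector[OF sec ne] by simp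
    then have "\<eta> = (\<lambda>_. False)"
      by (simp only: up_count_eq_0_iff)
    moreover have "(\<lambda>_. False)(z := True) = single z" for z
      unfolding single_def by (auto simp: fun_eq_iff)
    ultimately have "spin_lower \<psi>0 \<eta> = (\<Sum>z\<in>UNIV. of_bool (z = u) - of_bool (z = v))"
      unfolding total_ladder_def site_ladder_def \<psi>0_def by (simp add: single_inj)
    also have "\<dots> = 0" by (simp add: sum_subtractf)
    finally show False using ne by simp
  qed
  then have low: "spin_lower \<psi>0 = (\<lambda>_. 0)" by auto
  obtain \<psi> E where \<psi>: "in_sector 1 \<psi>" "spin_lower \<psi> = (\<lambda>_. 0)" "\<psi> \<noteq> (\<lambda>_. 0)"
    "heis_ham J \<psi> = (\<lambda>\<eta>. complex_of_real E * \<psi> \<eta>)"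
    unfolding heis_ham_perm_op by (rule perm_op_lowest_weight_eigenvector[OF sec low nz])
  have "\<psi> \<in> spin_space (real CARD('v) / 2 - 1)"
    using lowest_weight_spin_space[OF \<psi>(1,2)] by simp
  then show ?thesis
    by (rule that[OF _ \<psi>(3,4)])
qed

lemma finite_spin_energies:
  "finite {E. \<exists>\<psi>\<in>spin_space S. \<psi> \<noteq> (\<lambda>_. 0) \<and> heis_ham J \<psi> = (\<lambda>\<eta>. complex_of_real E * \<psi> \<eta>)}"
  by (rule finite_subset[OF _ finite_heis_ham_eigenvalues]) auto

lemma min_energy_le:
  "\<psi> \<in> spin_space S \<Longrightarrow> \<psi> \<noteq> (\<lambda>_. 0) \<Longrightarrow> heis_ham J \<psi> = (\<lambda>\<eta>. complex_of_real E * \<psi> \<eta>) \<Longrightarrow>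
     min_energy (heis_ham J) S \<le> E"
  unfolding min_energy_def using finite_spin_energies by (intro Min_le) auto

lemma min_energy_attained:
  assumes "\<psi> \<in> spin_space S" "\<psi> \<noteq> (\<lambda>_. 0)" "heis_ham J \<psi> = (\<lambda>\<eta>. complex_of_real E * \<psi> \<eta>)"
  obtains \<phi> where "\<phi> \<in> spin_space S" "\<phi> \<noteq> (\<lambda>_. 0)"
    "heis_ham J \<phi> = (\<lambda>\<eta>. complex_of_real (min_energy (heis_ham J) S) * \<phi> \<eta>)"
proof -
  have "min_energy (heis_ham J) S \<in>
      {E. \<exists>\<psi>\<in>spin_space S. \<psi> \<noteq> (\<lambda>_. 0) \<and> heis_ham J \<psi> = (\<lambda>\<eta>. complex_of_real E * \<psi> \<eta>)}"
    unfolding min_energy_def using finite_spin_energies assms by (intro Min_in) auto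
  then show ?thesis using that by blast
qed

end

section \<open>Consequences of FOEL\<close>

locale foel_heisenberg = heisenberg J for J :: "'v::finite \<Rightarrow> 'v \<Rightarrow> real" +
  assumes foel: "FOEL (heis_ham J)" and two_sites: "2 \<le> CARD('v)"
begin

lemma second_spin_space_nontrivial: "spin_space (real CARD('v) / 2 - 1) \<noteq> {(\<lambda>_. 0) :: 'v state}"
  using second_spin_eigenvector[OF two_sites] by blast

lemma min_energy_second_spin:
  "0 < min_energy (heis_ham J) (real CARD('v) / 2 - 1)"
  "sector_eigenvalue 1 (min_energy (heis_ham J) (real CARD('v) / 2 - 1))"
proof -
  have "min_energy (heis_ham J) (real CARD('v) / 2) < min_energy (heis_ham J) (real CARD('v) / 2 - 1)"
    using foel min_energy_top_spin(1) second_spin_space_nontrivial two_sites unfolding FOEL_def by simp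
  then show "0 < min_energy (heis_ham J) (real CARD('v) / 2 - 1)"
    using min_energy_top_spin(2) by simp
  obtain \<psi> E where "\<psi> \<in> spin_space (real CARD('v) / 2 - 1)" "\<psi> \<noteq> (\<lambda>_. 0)"
    "heis_ham J \<psi> = (\<lambda>\<eta>. complex_of_real E * \<psi> \<eta>)"
    by (rule second_spin_eigenvector[OF two_sites])
  then obtain \<phi> where \<phi>: "\<phi> \<in> spin_space (real CARD('v) / 2 - 1)" "\<phi> \<noteq> (\<lambda>_. 0)"
    "heis_ham J \<phi> = (\<lambda>\<eta>. complex_of_real (min_energy (heis_ham J) (real CARD('v) / 2 - 1)) * \<phi> \<eta>)"
    by (rule min_energy_attained)
  then obtain a b where "real a = 1" "real b = real CARD('v) - 1"
    "\<And>k. a \<le> k \<Longrightarrow> k \<le> b \<Longrightarrow> sector_eigenvalue k (min_energy (heis_ham J) (real CARD('v) / 2 - 1))"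
    using spin_eigenvector_multiplet[OF _ \<phi>] two_sites by auto
  then show "sector_eigenvalue 1 (min_energy (heis_ham J) (real CARD('v) / 2 - 1))"
    using two_sites by simp
qed

definition one_particle_gap :: real where
  "one_particle_gap = Min {l. 0 < l \<and> sector_eigenvalue 1 l}"

lemma one_particle_gap:
  "0 < one_particle_gap" "sector_eigenvalue 1 one_particle_gap"
  "one_particle_gap \<le> min_energy (heis_ham J) (real CARD('v) / 2 - 1)"
proof -
  let ?L = "{l. 0 < l \<and> sector_eigenvalue 1 l}"
  have fin: "finite ?L" by (rule finite_sector_eigenvalues)
  have E1: "min_energy (heis_ham J) (real CARD('v) / 2 - 1) \<in> ?L"
    using min_energy_second_spin by blast
  have "one_particle_gap \<in> ?L"
    unfolding one_particle_gap_def using fin E1 by (intro Min_in) auto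
  then show "0 < one_particle_gap" "sector_eigenvalue 1 one_particle_gap" by auto
  show "one_particle_gap \<le> min_energy (heis_ham J) (real CARD('v) / 2 - 1)"
    unfolding one_particle_gap_def by (rule Min_le[OF fin E1])
qed

text \<open>Lowering a one-particle eigenvector would give a zero-particle eigenvector with positive
  eigenvalue, so it is a lowest weight vector of total spin \<open>N/2 - 1\<close>; raising it reaches every
  sector up to \<open>N - 1\<close> particles.\<close>

lemma one_particle_gap_in_sector:
  assumes "1 \<le> n" "n \<le> CARD('v) - 1"
  shows "sector_eigenvalue n one_particle_gap"
proof -
  obtain \<psi> :: "'v state" where \<psi>: "in_sector 1 \<psi>" "\<psi> \<noteq> (\<lambda>_. 0)"
    "heis_ham J \<psi> = (\<lambda>\<eta>. complex_of_real one_particle_gap * \<psi> \<eta>)"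
    using one_particle_gap(2) unfolding sector_eigenvalue_def by blast
  have "spin_lower \<psi> = (\<lambda>_. 0)"
  proof (rule ccontr)
    assume "spin_lower \<psi> \<noteq> (\<lambda>_. 0)"
    moreover have "in_sector 0 (spin_lower \<psi>)"
      using in_sector_spin_lower[of 0] \<psi>(1) by simp
    moreover have "heis_ham J (spin_lower \<psi>) = (\<lambda>\<eta>. complex_of_real one_particle_gap * spin_lower \<psi> \<eta>)"
      using eigen_total_ladder_iter[OF \<psi>(3)[unfolded heis_ham_perm_op], where s = False and j = 1]
      unfolding heis_ham_perm_op by simp
    ultimately have "sector_eigenvalue 0 one_particle_gap"
      unfolding sector_eigenvalue_def by blast
    then show False
      using sector_eigenvalue_extreme[of 0 one_particle_gap] one_particle_gap(1) by simp
  qed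
  then have "\<psi> \<in> spin_space (real CARD('v) / 2 - 1)"
    using lowest_weight_spin_space[OF \<psi>(1)] by simp
  moreover have "0 \<le> real CARD('v) / 2 - 1"
    using two_sites by simp
  ultimately obtain a b where "real a = real CARD('v) / 2 - (real CARD('v) / 2 - 1)"
    "real b = real CARD('v) / 2 + (real CARD('v) / 2 - 1)"
    "\<And>k. a \<le> k \<Longrightarrow> k \<le> b \<Longrightarrow> sector_eigenvalue k one_particle_gap"
    using spin_eigenvector_multiplet[OF _ _ \<psi>(2,3)] by metis
  then show ?thesis
    using assms two_sites by (simp add: of_nat_diff)
qed

lemma second_spin_min_energy_less:
  assumes "0 \<le> S" "S < real CARD('v) / 2 - 1"
    and "\<phi> \<in> spin_space S" "\<phi> \<noteq> (\<lambda>_. 0)" "heis_ham J \<phi> = (\<lambda>\<eta>. complex_of_real l * \<phi> \<eta>)"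
  shows "min_energy (heis_ham J) (real CARD('v) / 2 - 1) < l"
proof -
  have "min_energy (heis_ham J) (real CARD('v) / 2 - 1) < min_energy (heis_ham J) S"
    using foel assms(1-4) second_spin_space_nontrivial unfolding FOEL_def by blast
  also have "min_energy (heis_ham J) S \<le> l"
    using min_energy_le assms(3-5) by blast
  finally show ?thesis .
qed

text \<open>A positive eigenvalue in sector \<open>n\<close> belongs to a multiplet of some spin \<open>S < N/2\<close>;
  for \<open>S = N/2 - 1\<close> it also occurs in the one-particle sector, and for smaller \<open>S\<close> FOEL
  puts it above the ground state energy of spin \<open>N/2 - 1\<close>.\<close>

lemma one_particle_gap_le:
  assumes "0 < l" "sector_eigenvalue n l"
  shows "one_particle_gap \<le> l"
proof -
  obtain \<phi> \<mu> where \<phi>: "in_sector n \<phi>" "\<phi> \<noteq> (\<lambda>_. 0)" "heis_ham J \<phi> = (\<lambda>\<eta>. complex_of_real l * \<phi> \<eta>)"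
    "casimir \<phi> = (\<lambda>\<eta>. complex_of_real \<mu> * \<phi> \<eta>)"
    using sector_eigenvalue_joint_eigenvector[OF assms(2)] by blast
  obtain a b where ab: "a \<le> n" "n \<le> b" "a + b = CARD('v)"
    "\<mu> = (real b - real CARD('v) / 2) * (real b - real CARD('v) / 2 + 1)"
    "\<And>k. a \<le> k \<Longrightarrow> k \<le> b \<Longrightarrow> sector_eigenvalue k l"
    using joint_eigenvector_multiplet[OF \<phi>] by metis
  have "b \<noteq> CARD('v)"
  proof
    assume "b = CARD('v)"
    then have "sector_eigenvalue CARD('v) l"
      using ab(1,2) ab(5)[of b] by simp
    then show False
      using sector_eigenvalue_extreme[of "CARD('v)" l] assms(1) by simp
  qed
  then consider "b = CARD('v) - 1" | "b < CARD('v) - 1"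
    using ab(3) by linarith
  then show ?thesis
  proof cases
    case 1
    then have "sector_eigenvalue 1 l"
      using ab(1,2,3,5) two_sites by simp
    then show ?thesis
      unfolding one_particle_gap_def using assms(1) finite_sector_eigenvalues by (intro Min_le) auto
  next
    case 2
    define S where "S = real b - real CARD('v) / 2"
    have "0 \<le> S" "S < real CARD('v) / 2 - 1"
      unfolding S_def using ab(1-3) 2 by linarith+
    moreover have "\<phi> \<in> spin_space S"
      unfolding spin_space_def S_def using \<phi>(4) ab(4) by simp
    ultimately show ?thesis
      using second_spin_min_energy_less \<phi>(2,3) one_particle_gap(3) by fastforce
  qed
qed

end

theorem proposition2:
  fixes J :: "'v::finite \<Rightarrow> 'v \<Rightarrow> real"
  assumes J_sym: "\<forall>x y. J x y = J y x"
    and J_nonneg: "\<forall>x y. 0 \<le> J x y"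
    and J_irrefl: "\<forall>x. J x x = 0"
    and connected: "\<forall>x y. (x, y) \<in> {(u, v). 0 < J u v}\<^sup>*"
    and foel: "FOEL (heis_ham J)"
  shows "\<forall>n. 1 \<le> n \<and> n \<le> card (UNIV :: 'v set) - 1 \<longrightarrow>
           ssep_gap (\<lambda>x y. J x y / 2) n = ssep_gap (\<lambda>x y. J x y / 2) 1"
proof (intro allI impI)
  fix n :: nat
  assume n: "1 \<le> n \<and> n \<le> card (UNIV :: 'v set) - 1"
  interpret foel_heisenberg J
    using J_irrefl foel n by unfold_locales auto
  have "Min {l. 0 < l \<and> sector_eigenvalue n l} = one_particle_gap"
    using n one_particle_gap(1) one_particle_gap_in_sector one_particle_gap_le finite_sector_eigenvalues
    by (intro Min_eqI) auto
  then show "ssep_gap (\<lambda>x y. J x y / 2) n = ssep_gap (\<lambda>x y. J x y / 2) 1"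
    unfolding ssep_gap_eq_Min one_particle_gap_def by simp
qed

end
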